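(* Let $\Omega_1,\Omega_2\subset\mathbb{R}^n$ be open, $1<q<\infty$, $q'=\frac{q}{q-1}$, and let $f\in BV_{\mathrm{loc}}(\Omega_1,\mathbb{R}^n)$ with $f(\Omega_1)\subset\Omega_2$ have no jump part, such that $u\circ f\in BV_{\mathrm{loc}}(\Omega_1)$ for all $u\in C_c^\infty(\Omega_2)$. For an open set $G\subset\Omega_2$ let $M(G)\in[0,\infty]$ be the smallest constant such that $|D(u\circ f)|(\Omega_1)\le M(G)\|Du\|_{L^q(G)}$ for all $u\in C_c^\infty(G)$. Then $M$ is monotone ($M(G)\le M(\tilde G)$ whenever $G\subset\tilde G$ are open) and, for every finite family $G_1,\dots,G_k$ of pairwise disjoint open subsets of $\Omega_2$, $$M\Big(\bigcup_{j=1}^k G_j\Big)^{q'}\le\sum_{j=1}^k M(G_j)^{q'}.$$ *)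

theory Defs
  imports "HOL-Analysis.Analysis"
begin

definition partial :: "(real^'n \<Rightarrow> real) \<Rightarrow> 'n \<Rightarrow> real^'n \<Rightarrow> real" where
  "partial g i x = deriv (\<lambda>t. g (x + t *\<^sub>R axis i 1)) 0"

definition has_partials_on :: "(real^'n) set \<Rightarrow> (real^'n \<Rightarrow> real) \<Rightarrow> bool" where
  "has_partials_on U g \<longleftrightarrow>
     (\<forall>i. \<forall>x\<in>U. (\<lambda>t. g (x + t *\<^sub>R axis i 1)) differentiable (at 0))"

fun Ck_on :: "nat \<Rightarrow> (real^'n) set \<Rightarrow> (real^'n \<Rightarrow> real) \<Rightarrow> bool" where
  "Ck_on 0 U g = continuous_on U g"
| "Ck_on (Suc k) U g = (continuous_on U g \<and> has_partials_on U g \<and>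
                        (\<forall>i. Ck_on k U (partial g i)))"

definition smooth_on :: "(real^'n) set \<Rightarrow> (real^'n \<Rightarrow> real) \<Rightarrow> bool" where
  "smooth_on U g \<longleftrightarrow> (\<forall>k. Ck_on k U g)"

definition tsupport :: "('a::topological_space \<Rightarrow> 'b::zero) \<Rightarrow> 'a set" where
  "tsupport g = closure {x. g x \<noteq> 0}"

definition test_fn :: "(real^'n) set \<Rightarrow> (real^'n \<Rightarrow> real) \<Rightarrow> bool" where
  "test_fn G u \<longleftrightarrow> smooth_on UNIV u \<and> compact (tsupport u) \<and> tsupport u \<subseteq> G"

definition C1c :: "(real^'n) set \<Rightarrow> (real^'n \<Rightarrow> real) \<Rightarrow> bool" where
  "C1c U g \<longleftrightarrow> Ck_on 1 UNIV g \<and> compact (tsupport g) \<and> tsupport g \<subseteq> U"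

definition grad :: "(real^'n \<Rightarrow> real) \<Rightarrow> real^'n \<Rightarrow> real^'n" where
  "grad u x = (\<chi> i. partial u i x)"

definition divg :: "(real^'n \<Rightarrow> real^'n) \<Rightarrow> real^'n \<Rightarrow> real" where
  "divg \<phi> x = (\<Sum>i\<in>UNIV. partial (\<lambda>y. \<phi> y $ i) i x)"

definition Lq_norm_grad :: "real \<Rightarrow> (real^'n) set \<Rightarrow> (real^'n \<Rightarrow> real) \<Rightarrow> real" where
  "Lq_norm_grad q G u = (LINT x:G|lborel. norm (grad u x) powr q) powr (1 / q)"

definition var :: "(real^'n \<Rightarrow> real) \<Rightarrow> (real^'n) set \<Rightarrow> ennreal" where
  "var g U = (SUP \<phi> \<in> {\<phi> :: real^'n \<Rightarrow> real^'n. (\<forall>i. C1c U (\<lambda>y. \<phi> y $ i)) \<and>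
                                   (\<forall>x. norm (\<phi> x) \<le> 1)}.
                ennreal (LINT x:U|lborel. g x * divg \<phi> x))"

text \<open>Total variation |Df|(U) of a vector-valued function (Frobenius norm on test fields).\<close>
definition var_vec :: "(real^'n \<Rightarrow> real^'n) \<Rightarrow> (real^'n) set \<Rightarrow> ennreal" where
  "var_vec f U = (SUP \<Phi> \<in> {\<Phi> :: real^'n \<Rightarrow> real^'n^'n. (\<forall>i j. C1c U (\<lambda>y. \<Phi> y $ i $ j)) \<and>
                                   (\<forall>x. norm (\<Phi> x) \<le> 1)}.
                ennreal (LINT x:U|lborel. (\<Sum>i\<in>UNIV. f x $ i * divg (\<lambda>y. \<Phi> y $ i) x)))"

text \<open>The total variation measure |Df|(A) of an arbitrary set A \<subseteq> \<Omega> (outer regularity).\<close>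
definition var_vec_meas :: "(real^'n \<Rightarrow> real^'n) \<Rightarrow> (real^'n) set \<Rightarrow> (real^'n) set \<Rightarrow> ennreal" where
  "var_vec_meas f \<Omega> A = (INF V \<in> {V. open V \<and> A \<subseteq> V \<and> V \<subseteq> \<Omega>}. var_vec f V)"

definition L1_loc :: "(real^'n) set \<Rightarrow> (real^'n \<Rightarrow> real) \<Rightarrow> bool" where
  "L1_loc \<Omega> g \<longleftrightarrow> (\<forall>K. compact K \<and> K \<subseteq> \<Omega> \<longrightarrow> set_integrable lborel K g)"

definition BV_loc :: "(real^'n) set \<Rightarrow> (real^'n \<Rightarrow> real) \<Rightarrow> bool" where
  "BV_loc \<Omega> g \<longleftrightarrow> L1_loc \<Omega> g \<and>
     (\<forall>V. open V \<and> compact (closure V) \<and> closure V \<subseteq> \<Omega> \<longrightarrow> var g V < \<infinity>)"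

definition BV_loc_vec :: "(real^'n) set \<Rightarrow> (real^'n \<Rightarrow> real^'n) \<Rightarrow> bool" where
  "BV_loc_vec \<Omega> f \<longleftrightarrow> (\<forall>i. BV_loc \<Omega> (\<lambda>x. f x $ i))"

definition half_ball :: "real^'n \<Rightarrow> real \<Rightarrow> real^'n \<Rightarrow> (real^'n) set" where
  "half_ball x \<rho> \<nu> = {y \<in> ball x \<rho>. (y - x) \<bullet> \<nu> > 0}"

definition avg_dev :: "(real^'n \<Rightarrow> real^'n) \<Rightarrow> (real^'n) set \<Rightarrow> real^'n \<Rightarrow> real" where
  "avg_dev f H a = (LINT y:H|lborel. norm (f y - a)) / measure lborel H"

text \<open>Approximate jump points (Ambrosio--Fusco--Pallara, Def. 3.67).\<close>
definition jump_set :: "(real^'n \<Rightarrow> real^'n) \<Rightarrow> (real^'n) set \<Rightarrow> (real^'n) set" where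
  "jump_set f \<Omega> = {x \<in> \<Omega>. \<exists>a b \<nu>. a \<noteq> b \<and> norm \<nu> = 1 \<and>
      ((\<lambda>\<rho>. avg_dev f (half_ball x \<rho> \<nu>) a) \<longlongrightarrow> 0) (at_right 0) \<and>
      ((\<lambda>\<rho>. avg_dev f (half_ball x \<rho> (- \<nu>)) b) \<longlongrightarrow> 0) (at_right 0)}"

text \<open>f has no jump part: D^j f = Df restricted to J_f vanishes, i.e. |Df|(J_f) = 0.\<close>
definition no_jump_part :: "(real^'n) set \<Rightarrow> (real^'n \<Rightarrow> real^'n) \<Rightarrow> bool" where
  "no_jump_part \<Omega> f \<longleftrightarrow> var_vec_meas f \<Omega> (jump_set f \<Omega>) = 0"

definition Mconst :: "(real^'n \<Rightarrow> real^'n) \<Rightarrow> (real^'n) set \<Rightarrow> real \<Rightarrow> (real^'n) set \<Rightarrow> ennreal" where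
  "Mconst f \<Omega>1 q G = Inf {C :: ennreal. \<forall>u. test_fn G u \<longrightarrow>
       var (u \<circ> f) \<Omega>1 \<le> C * ennreal (Lq_norm_grad q G u)}"

definition ennpow :: "ennreal \<Rightarrow> real \<Rightarrow> ennreal" where
  "ennpow x p = (if x = \<infinity> then \<infinity> else ennreal (enn2real x powr p))"

end

theory Submission
  imports Defs
begin

text \<open>Monotonicity is immediate: a test function on \<open>G\<close> is one on any larger \<open>G'\<close>, and the
  \<open>L\<^sup>q\<close> norm of its gradient does not see the larger domain. For pairwise disjoint open sets
  \<open>G\<^sub>1, \<dots>, G\<^sub>k\<close>, a test function \<open>u\<close> on their union splits as \<open>u = \<Sum>\<^sub>j u\<^sub>j\<close>, where \<open>u\<^sub>j\<close> agrees
  with \<open>u\<close> on \<open>G\<^sub>j\<close> and vanishes elsewhere; \<open>u\<^sub>j\<close> is again a test function, because its support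
  lies in \<open>supp u\<close> minus the other (open) \<open>G\<^sub>i\<close>, a compact subset of \<open>G\<^sub>j\<close>. Writing \<open>N\<^sub>j\<close> for the
  \<open>L\<^sup>q(G\<^sub>j)\<close> norm of \<open>Du\<close>, subadditivity of the total variation and the definition of \<open>M(G\<^sub>j)\<close>
  give \<open>|D(u \<circ> f)|(\<Omega>\<^sub>1) \<le> \<Sum>\<^sub>j M(G\<^sub>j) N\<^sub>j\<close>, and the discrete H\<ouml>lder inequality with exponents
  \<open>q'\<close> and \<open>q\<close> bounds this by \<open>(\<Sum>\<^sub>j M(G\<^sub>j) ^ q') ^ (1/q')\<close> times \<open>(\<Sum>\<^sub>j N\<^sub>j ^ q) ^ (1/q)\<close>, and the
  latter factor is the \<open>L\<^sup>q\<close> norm of \<open>Du\<close> on the union.\<close>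

lemma eventually_line_in_open:
  fixes x v :: "'a::real_normed_vector"
  assumes "open V" "x \<in> V"
  shows "eventually (\<lambda>t. x + t *\<^sub>R v \<in> V) (nhds (0::real))"
proof -
  have "continuous (at 0) (\<lambda>t::real. x + t *\<^sub>R v)"
    by (intro continuous_intros)
  then show ?thesis
    using assms by (simp add: continuous_at tendsto_def eventually_nhds_conv_at)
qed

lemma eventually_line_cong_open:
  fixes g h :: "'a::real_normed_vector \<Rightarrow> 'b"
  assumes "open V" "x \<in> V" "\<And>y. y \<in> V \<Longrightarrow> g y = h y"
  shows "eventually (\<lambda>t. g (x + t *\<^sub>R v) = h (x + t *\<^sub>R v)) (nhds (0::real))"
  using eventually_line_in_open[OF assms(1,2)] by eventually_elim (rule assms(3))

lemma partial_cong_open: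
  assumes "open V" "x \<in> V" "\<And>y. y \<in> V \<Longrightarrow> g y = h y"
  shows "partial g i x = partial h i x"
  unfolding partial_def by (rule deriv_cong_ev[OF eventually_line_cong_open[OF assms] refl])

lemma has_partials_on_cong_open:
  assumes "open V" "\<And>y. y \<in> V \<Longrightarrow> g y = h y"
  shows "has_partials_on V g \<longleftrightarrow> has_partials_on V h"
proof -
  have "((\<lambda>t. g (x + t *\<^sub>R axis i 1)) has_real_derivative D) (at 0) \<longleftrightarrow>
        ((\<lambda>t. h (x + t *\<^sub>R axis i 1)) has_real_derivative D) (at 0)" if "x \<in> V" for x i D
    by (rule DERIV_cong_ev[OF refl eventually_line_cong_open[OF assms(1) that assms(2)] refl])
  then show ?thesis
    unfolding has_partials_on_def real_differentiable_def by blast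
qed

lemma Ck_on_cong_open:
  assumes "open V" "\<And>y. y \<in> V \<Longrightarrow> g y = h y"
  shows "Ck_on k V g \<longleftrightarrow> Ck_on k V h"
  using assms(2)
proof (induction k arbitrary: g h)
  case 0
  then show ?case using continuous_on_cong[OF refl, of V g h] by simp
next
  case (Suc k)
  have "Ck_on k V (partial g i) \<longleftrightarrow> Ck_on k V (partial h i)" for i
    by (rule Suc.IH) (rule partial_cong_open[OF assms(1) _ Suc.prems])
  moreover have "continuous_on V g \<longleftrightarrow> continuous_on V h"
    using Suc.prems by (rule continuous_on_cong[OF refl])
  ultimately show ?case
    using has_partials_on_cong_open[OF assms(1) Suc.prems] by simp
qed

lemma Ck_on_subset: "Ck_on k U g \<Longrightarrow> V \<subseteq> U \<Longrightarrow> Ck_on k V g"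
  by (induction k arbitrary: g)
     (auto simp: has_partials_on_def intro: continuous_on_subset)

lemma Ck_on_open_Un:
  "open A \<Longrightarrow> open B \<Longrightarrow> Ck_on k A g \<Longrightarrow> Ck_on k B g \<Longrightarrow> Ck_on k (A \<union> B) g"
  by (induction k arbitrary: g)
     (auto simp: has_partials_on_def intro: continuous_on_open_Un)

lemma partial_const_zero [simp]: "partial (\<lambda>_. 0) i = (\<lambda>_. 0)"
  unfolding partial_def by simp

lemma Ck_on_const_zero: "Ck_on k U (\<lambda>_. 0)"
  by (induction k) (simp_all add: has_partials_on_def)

lemma closed_tsupport [simp]: "closed (tsupport g)"
  by (simp add: tsupport_def)

lemma eq_0_outside_tsupport: "x \<notin> tsupport g \<Longrightarrow> g x = 0"
  using closure_subset[of "{x. g x \<noteq> 0}"] by (auto simp: tsupport_def)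

lemma tsupport_subset_closed: "closed T \<Longrightarrow> (\<And>x. g x \<noteq> 0 \<Longrightarrow> x \<in> T) \<Longrightarrow> tsupport g \<subseteq> T"
  unfolding tsupport_def by (rule closure_minimal) auto

lemma partial_eq_0_outside_tsupport:
  assumes "x \<notin> tsupport g"
  shows "partial g i x = 0"
proof -
  have "partial g i x = partial (\<lambda>_. 0) i x"
    by (rule partial_cong_open[of "- tsupport g"]) (use assms eq_0_outside_tsupport in auto)
  then show ?thesis by simp
qed

lemma grad_eq_0_outside_tsupport: "x \<notin> tsupport g \<Longrightarrow> grad g x = 0"
  by (simp add: grad_def partial_eq_0_outside_tsupport vec_eq_iff)

lemma grad_restrict_open:
  assumes "open G" "x \<in> G"
  shows "grad (\<lambda>y. if y \<in> G then u y else 0) x = grad u x"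
proof -
  have "partial (\<lambda>y. if y \<in> G then u y else 0) i x = partial u i x" for i
    by (rule partial_cong_open[OF assms]) simp
  then show ?thesis by (simp add: grad_def)
qed

lemma test_fn_restrict_open:
  assumes u: "test_fn W u" and "open G" "open H" "tsupport u \<subseteq> G \<union> H" "G \<inter> H = {}"
  shows "test_fn G (\<lambda>x. if x \<in> G then u x else 0)" (is "test_fn G ?v")
proof -
  define T where "T = tsupport u - H"
  have "compact T"
    unfolding T_def Diff_eq using u \<open>open H\<close>
    by (intro compact_Int_closed) (auto simp: test_fn_def)
  have "T \<subseteq> G" using assms(4) by (auto simp: T_def)
  have nz: "x \<in> T" if "?v x \<noteq> 0" for x
    using that \<open>G \<inter> H = {}\<close> eq_0_outside_tsupport[of x u] by (auto simp: T_def split: if_splits)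
  have "open (- T)"
    using \<open>compact T\<close> by (simp add: compact_imp_closed open_Compl)
  have "tsupport ?v \<subseteq> T"
    using \<open>compact T\<close> nz by (intro tsupport_subset_closed compact_imp_closed)
  then have "compact (tsupport ?v)"
    using compact_Int_closed[OF \<open>compact T\<close> closed_tsupport, of ?v] by (simp add: Int_absorb1)
  have "Ck_on k UNIV ?v" for k
  proof -
    have "Ck_on k G u"
      using u by (auto simp: test_fn_def smooth_on_def intro: Ck_on_subset)
    then have "Ck_on k G ?v"
      using Ck_on_cong_open[OF \<open>open G\<close>, of ?v u] by simp
    moreover have "Ck_on k (- T) ?v"
      using Ck_on_cong_open[OF \<open>open (- T)\<close>, of ?v "\<lambda>_. 0"] Ck_on_const_zero nz by blast
    ultimately have "Ck_on k (G \<union> - T) ?v"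
      using \<open>open G\<close> \<open>open (- T)\<close> by (rule Ck_on_open_Un[rotated 2])
    moreover have "G \<union> - T = UNIV" using \<open>T \<subseteq> G\<close> by blast
    ultimately show ?thesis by simp
  qed
  then show ?thesis
    using \<open>compact (tsupport ?v)\<close> \<open>tsupport ?v \<subseteq> T\<close> \<open>T \<subseteq> G\<close>
    by (simp add: test_fn_def smooth_on_def)
qed

lemma continuous_on_grad:
  assumes "test_fn W u"
  shows "continuous_on UNIV (grad u)"
proof -
  have "Ck_on (Suc 0) UNIV u" using assms by (simp add: test_fn_def smooth_on_def)
  then show ?thesis unfolding grad_def by (intro continuous_on_vec_lambda) simp
qed

lemma integrable_norm_grad_powr:
  assumes u: "test_fn W u" and "q > 0"
  shows "integrable lborel (\<lambda>x. norm (grad u x) powr q)"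
proof -
  have "continuous_on (tsupport u) (\<lambda>x. norm (grad u x) powr q)"
    using continuous_on_grad[OF u] \<open>q > 0\<close>
    by (intro continuous_on_powr' continuous_on_norm continuous_intros)
       (auto intro: continuous_on_subset)
  then have "integrable lborel (\<lambda>x. indicator (tsupport u) x *\<^sub>R norm (grad u x) powr q)"
    using u by (intro borel_integrable_compact) (auto simp: test_fn_def)
  also have "(\<lambda>x. indicator (tsupport u) x *\<^sub>R norm (grad u x) powr q) = (\<lambda>x. norm (grad u x) powr q)"
    by (auto simp: fun_eq_iff indicator_def of_bool_def grad_eq_0_outside_tsupport)
  finally show ?thesis .
qed

lemma Lq_norm_grad_superset:
  assumes "test_fn G u" "G \<subseteq> G'"
  shows "Lq_norm_grad q G' u = Lq_norm_grad q G u"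
proof -
  have "(\<lambda>x. indicator G' x *\<^sub>R norm (grad u x) powr q) = (\<lambda>x. indicator G x *\<^sub>R norm (grad u x) powr q)"
    using assms grad_eq_0_outside_tsupport[of _ u]
    by (auto simp: fun_eq_iff indicator_def of_bool_def test_fn_def)
  then show ?thesis by (simp only: Lq_norm_grad_def set_lebesgue_integral_def)
qed

lemma set_integral_norm_grad_powr_disjoint_UN:
  assumes u: "test_fn W u" and "q > 0" "finite J" "\<And>j. j \<in> J \<Longrightarrow> open (G j)"
    and disj: "\<And>i j. i \<in> J \<Longrightarrow> j \<in> J \<Longrightarrow> i \<noteq> j \<Longrightarrow> G i \<inter> G j = {}"
  shows "(LINT x:(\<Union>j\<in>J. G j)|lborel. norm (grad u x) powr q)
           = (\<Sum>j\<in>J. LINT x:G j|lborel. norm (grad u x) powr q)"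
proof (rule set_integral_finite_UN_AE[OF \<open>finite J\<close>])
  fix i j assume "i \<in> J" "j \<in> J"
  then show "AE x in lborel. x \<in> G i \<and> x \<in> G j \<longrightarrow> i = j" using disj by blast
next
  fix j assume "j \<in> J"
  then show "G j \<in> sets lborel" using assms(4) by simp
  show "set_integrable lborel (G j) (\<lambda>x. norm (grad u x) powr q)"
    unfolding set_integrable_def using \<open>G j \<in> sets lborel\<close>
    by (intro integrable_mult_indicator integrable_norm_grad_powr[OF u \<open>q > 0\<close>]) simp
qed

lemma set_integrable_mult_divg:
  fixes \<phi> :: "real^'n \<Rightarrow> real^'n"
  assumes \<phi>: "\<forall>i. C1c U (\<lambda>y. \<phi> y $ i)" and g: "L1_loc U g"
  shows "set_integrable lborel U (\<lambda>x. g x * divg \<phi> x)"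
proof -
  define K where "K = (\<Union>i. tsupport (\<lambda>y. \<phi> y $ i))"
  have "compact K" "K \<subseteq> U"
    using \<phi> by (auto simp: K_def C1c_def)
  have div0: "divg \<phi> x = 0" if "x \<notin> K" for x
    using that by (simp add: K_def divg_def partial_eq_0_outside_tsupport)
  have "Ck_on (Suc 0) UNIV (\<lambda>y. \<phi> y $ i)" for i
    using \<phi> by (simp add: C1c_def)
  then have cont: "continuous_on UNIV (divg \<phi>)"
    unfolding divg_def by (intro continuous_on_sum) simp
  have "bounded (divg \<phi> ` K)"
    using \<open>compact K\<close> continuous_on_subset[OF cont]
    by (intro compact_imp_bounded compact_continuous_image) simp_all
  then obtain B where "\<forall>y \<in> divg \<phi> ` K. norm y \<le> B"
    unfolding bounded_iff by blast
  then have B: "\<And>x. x \<in> K \<Longrightarrow> \<bar>divg \<phi> x\<bar> \<le> B" by simp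
  have gK: "set_integrable lborel K g"
    using g \<open>compact K\<close> \<open>K \<subseteq> U\<close> by (simp add: L1_loc_def)
  have "set_integrable lborel K (\<lambda>x. g x * divg \<phi> x)"
  proof (rule set_integrable_bound[where f = "\<lambda>x. B * g x"])
    show "set_integrable lborel K (\<lambda>x. B * g x)" using gK by simp
    have "(\<lambda>x. indicator K x *\<^sub>R g x) \<in> borel_measurable lborel"
      using gK by (simp add: set_integrable_def borel_measurable_integrable)
    then show "set_borel_measurable lborel K (\<lambda>x. g x * divg \<phi> x)"
      using borel_measurable_continuous_onI[OF cont]
      by (simp add: set_borel_measurable_def mult.assoc[symmetric])
    show "AE x in lborel. x \<in> K \<longrightarrow> norm (g x * divg \<phi> x) \<le> norm (B * g x)"
    proof (intro AE_I2 impI)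
      fix x assume "x \<in> K"
      then have "\<bar>divg \<phi> x\<bar> \<le> \<bar>B\<bar>" using B by (meson abs_ge_self order_trans)
      then show "norm (g x * divg \<phi> x) \<le> norm (B * g x)"
        by (simp add: abs_mult mult.commute[of _ "\<bar>g x\<bar>"] mult_left_mono)
    qed
  qed
  moreover have "(\<lambda>x. indicator K x *\<^sub>R (g x * divg \<phi> x)) = (\<lambda>x. indicator U x *\<^sub>R (g x * divg \<phi> x))"
    using \<open>K \<subseteq> U\<close> div0 by (auto simp: fun_eq_iff indicator_def)
  ultimately show ?thesis unfolding set_integrable_def by (simp only:)
qed

lemma integral_mult_divg_le_var:
  assumes "\<forall>i. C1c U (\<lambda>y. \<phi> y $ i)" "\<forall>x. norm (\<phi> x) \<le> 1"
  shows "ennreal (LINT x:U|lborel. g x * divg \<phi> x) \<le> var g U"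
  unfolding var_def using assms by (intro SUP_upper) simp

lemma ennreal_sum_le: "ennreal (\<Sum>j\<in>J. x j) \<le> (\<Sum>j\<in>J. ennreal (x j))"
proof -
  have "ennreal (\<Sum>j\<in>J. x j) \<le> ennreal (\<Sum>j\<in>J. max (x j) 0)"
    by (intro ennreal_leI sum_mono) simp
  also have "\<dots> = (\<Sum>j\<in>J. ennreal (max (x j) 0))"
    by simp
  also have "\<dots> = (\<Sum>j\<in>J. ennreal (x j))"
    by (intro sum.cong refl) (simp add: max_def ennreal_neg)
  finally show ?thesis .
qed

lemma var_sum_le:
  fixes g :: "'i \<Rightarrow> real^'n \<Rightarrow> real"
  assumes "finite J"
    and int: "\<And>\<phi> j. \<forall>i. C1c U (\<lambda>y. \<phi> y $ i) \<Longrightarrow> j \<in> J \<Longrightarrow>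
                set_integrable lborel U (\<lambda>x. g j x * divg \<phi> x)"
  shows "var (\<lambda>x. \<Sum>j\<in>J. g j x) U \<le> (\<Sum>j\<in>J. var (g j) U)"
  unfolding var_def[of "\<lambda>x. \<Sum>j\<in>J. g j x"]
proof (rule SUP_least, safe)
  fix \<phi> :: "real^'n \<Rightarrow> real^'n"
  assume \<phi>: "\<forall>i. C1c U (\<lambda>y. \<phi> y $ i)" "\<forall>x. norm (\<phi> x) \<le> 1"
  have "(LINT x:U|lborel. (\<Sum>j\<in>J. g j x) * divg \<phi> x) = (\<Sum>j\<in>J. LINT x:U|lborel. g j x * divg \<phi> x)"
    unfolding sum_distrib_right set_lebesgue_integral_def scaleR_sum_right
    using int[OF \<phi>(1)] by (intro Bochner_Integration.integral_sum) (simp add: set_integrable_def)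
  then have "ennreal (LINT x:U|lborel. (\<Sum>j\<in>J. g j x) * divg \<phi> x)
               \<le> (\<Sum>j\<in>J. ennreal (LINT x:U|lborel. g j x * divg \<phi> x))"
    by (simp add: ennreal_sum_le)
  also have "\<dots> \<le> (\<Sum>j\<in>J. var (g j) U)"
    by (intro sum_mono integral_mult_divg_le_var \<phi>)
  finally show "ennreal (LINT x:U|lborel. (\<Sum>j\<in>J. g j x) * divg \<phi> x) \<le> (\<Sum>j\<in>J. var (g j) U)" .
qed

lemma Holder_inequality_sum:
  fixes a b :: "'i \<Rightarrow> real"
  assumes "p > 1" "q > 1" "1/p + 1/q = 1"
    and a: "\<And>j. j \<in> J \<Longrightarrow> a j \<ge> 0" and b: "\<And>j. j \<in> J \<Longrightarrow> b j \<ge> 0"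
  shows "(\<Sum>j\<in>J. a j * b j) \<le> (\<Sum>j\<in>J. a j powr p) powr (1/p) * (\<Sum>j\<in>J. b j powr q) powr (1/q)"
proof (cases "finite J")
  case False
  then show ?thesis by simp
next
  case True
  define A where "A = (\<Sum>j\<in>J. a j powr p)"
  define B where "B = (\<Sum>j\<in>J. b j powr q)"
  show ?thesis
  proof (cases "A = 0 \<or> B = 0")
    case True
    then have "\<forall>j\<in>J. a j = 0 \<or> b j = 0"
      using \<open>finite J\<close> by (auto simp: A_def B_def sum_nonneg_eq_0_iff)
    then have "(\<Sum>j\<in>J. a j * b j) = 0" by (intro sum.neutral) auto
    then show ?thesis by simp
  next
    case False
    then have "A > 0" "B > 0"
      by (simp_all add: A_def B_def order.not_eq_order_implies_strict sum_nonneg)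
    define \<alpha> where "\<alpha> = A powr (1/p)"
    define \<beta> where "\<beta> = B powr (1/q)"
    have "\<alpha> > 0" "\<beta> > 0" using \<open>A > 0\<close> \<open>B > 0\<close> by (simp_all add: \<alpha>_def \<beta>_def)
    have "\<alpha> powr p = A" "\<beta> powr q = B"
      using \<open>A > 0\<close> \<open>B > 0\<close> assms(1,2) by (simp_all add: \<alpha>_def \<beta>_def powr_powr)
    have Young: "(a j / \<alpha>) * (b j / \<beta>) \<le> (a j powr p / A) / p + (b j powr q / B) / q" if "j \<in> J" for j
      using Youngs_inequality[of p q "a j / \<alpha>" "b j / \<beta>"] assms a[OF that] b[OF that]
        \<open>\<alpha> > 0\<close> \<open>\<beta> > 0\<close> \<open>\<alpha> powr p = A\<close> \<open>\<beta> powr q = B\<close>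
      by (simp add: powr_divide)
    have "(\<Sum>j\<in>J. a j * b j) / (\<alpha> * \<beta>) = (\<Sum>j\<in>J. (a j / \<alpha>) * (b j / \<beta>))"
      by (simp add: sum_divide_distrib)
    also have "\<dots> \<le> (\<Sum>j\<in>J. (a j powr p / A) / p + (b j powr q / B) / q)"
      by (intro sum_mono Young)
    also have "\<dots> = 1"
      using \<open>A > 0\<close> \<open>B > 0\<close> assms(3)
      by (simp add: sum.distrib flip: sum_divide_distrib A_def B_def)
    finally show ?thesis
      using \<open>\<alpha> > 0\<close> \<open>\<beta> > 0\<close> by (simp add: divide_le_eq \<alpha>_def \<beta>_def A_def B_def)
  qed
qed

lemma le_Inf_mult_ennreal:
  fixes v a :: ennreal
  assumes "\<And>C. C \<in> S \<Longrightarrow> v \<le> C * a" "S \<noteq> {}" "a \<noteq> top"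
  shows "v \<le> Inf S * a"
proof (cases "a = 0")
  case True
  then show ?thesis using assms(1,2) by auto
next
  case False
  have "v / a \<le> Inf S"
    using assms(1) False by (intro Inf_greatest divide_le_posI_ennreal) (simp_all add: mult.commute zero_less_iff_neq_zero)
  then have "v / a * a \<le> Inf S * a"
    by (rule mult_right_mono) simp
  then show ?thesis
    using False assms(3) by (simp add: ennreal_divide_times top.not_eq_extremum)
qed

lemma Mconst_mono:
  assumes "G \<subseteq> G'"
  shows "Mconst f \<Omega>1 q G \<le> Mconst f \<Omega>1 q G'"
  unfolding Mconst_def
proof (rule Inf_superset_mono, safe)
  fix C u
  assume C: "\<forall>u. test_fn G' u \<longrightarrow> var (u \<circ> f) \<Omega>1 \<le> C * ennreal (Lq_norm_grad q G' u)"
    and u: "test_fn G u"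
  then have "test_fn G' u" using assms by (auto simp: test_fn_def)
  then show "var (u \<circ> f) \<Omega>1 \<le> C * ennreal (Lq_norm_grad q G u)"
    using C Lq_norm_grad_superset[OF u assms] by metis
qed

lemma var_comp_le_Mconst:
  assumes "Mconst f \<Omega>1 q G < top" "test_fn G u"
  shows "var (u \<circ> f) \<Omega>1 \<le> Mconst f \<Omega>1 q G * ennreal (Lq_norm_grad q G u)"
  unfolding Mconst_def
proof (rule le_Inf_mult_ennreal)
  show "{C. \<forall>u. test_fn G u \<longrightarrow> var (u \<circ> f) \<Omega>1 \<le> C * ennreal (Lq_norm_grad q G u)} \<noteq> {}"
    using assms(1) unfolding Mconst_def by (metis Inf_empty less_irrefl)
qed (use assms(2) in auto)

lemma Lq_norm_grad_nonneg: "Lq_norm_grad q G u \<ge> 0"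
  by (simp add: Lq_norm_grad_def)

lemma Lq_norm_grad_restrict_open:
  assumes "open G"
  shows "Lq_norm_grad q G (\<lambda>x. if x \<in> G then u x else 0) = Lq_norm_grad q G u"
proof -
  have "(LINT x:G|lborel. norm (grad (\<lambda>x. if x \<in> G then u x else 0) x) powr q)
          = (LINT x:G|lborel. norm (grad u x) powr q)"
    using assms by (intro set_lebesgue_integral_cong) (simp_all add: grad_restrict_open)
  then show ?thesis by (simp add: Lq_norm_grad_def)
qed

lemma Lq_norm_grad_disjoint_UN:
  assumes u: "test_fn W u" and "q > 0" "finite J" "\<And>j. j \<in> J \<Longrightarrow> open (G j)"
    and "\<And>i j. i \<in> J \<Longrightarrow> j \<in> J \<Longrightarrow> i \<noteq> j \<Longrightarrow> G i \<inter> G j = {}"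
  shows "Lq_norm_grad q (\<Union>j\<in>J. G j) u = (\<Sum>j\<in>J. Lq_norm_grad q (G j) u powr q) powr (1/q)"
proof -
  have "Lq_norm_grad q (G j) u powr q = (LINT x:G j|lborel. norm (grad u x) powr q)" for j
  proof -
    have "(LINT x:G j|lborel. norm (grad u x) powr q) \<ge> 0"
      unfolding set_lebesgue_integral_def
      by (intro Bochner_Integration.integral_nonneg) (simp add: indicator_def)
    then show ?thesis using \<open>q > 0\<close> by (simp add: Lq_norm_grad_def powr_powr)
  qed
  then show ?thesis
    using set_integral_norm_grad_powr_disjoint_UN[OF assms] by (simp add: Lq_norm_grad_def)
qed

lemma sum_restrict_disjoint:
  fixes u :: "'a \<Rightarrow> 'b::comm_monoid_add"
  assumes "finite J" and disj: "\<And>i j. i \<in> J \<Longrightarrow> j \<in> J \<Longrightarrow> i \<noteq> j \<Longrightarrow> G i \<inter> G j = {}"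
    and "y \<notin> (\<Union>j\<in>J. G j) \<Longrightarrow> u y = 0"
  shows "(\<Sum>j\<in>J. if y \<in> G j then u y else 0) = u y"
proof (cases "y \<in> (\<Union>j\<in>J. G j)")
  case True
  then obtain j0 where "j0 \<in> J" "y \<in> G j0" by blast
  have "(\<Sum>j\<in>J. if y \<in> G j then u y else 0)
          = (if y \<in> G j0 then u y else 0) + (\<Sum>j\<in>J - {j0}. if y \<in> G j then u y else 0)"
    by (rule sum.remove[OF \<open>finite J\<close> \<open>j0 \<in> J\<close>])
  also have "(\<Sum>j\<in>J - {j0}. if y \<in> G j then u y else 0) = 0"
  proof (rule sum.neutral, rule ballI)
    fix j assume "j \<in> J - {j0}"
    then have "y \<notin> G j" using disj[of j0 j] \<open>j0 \<in> J\<close> \<open>y \<in> G j0\<close> by blast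
    then show "(if y \<in> G j then u y else 0) = 0" by simp
  qed
  finally show ?thesis using \<open>y \<in> G j0\<close> by simp
next
  case False
  then show ?thesis using assms(3) by simp
qed

lemma var_comp_le_sum_Mconst:
  fixes f :: "real^'n \<Rightarrow> real^'n" and G :: "'i \<Rightarrow> (real^'n) set"
  assumes L1: "\<And>v. test_fn \<Omega>2 v \<Longrightarrow> L1_loc \<Omega>1 (v \<circ> f)"
    and "finite J" and G: "\<And>j. j \<in> J \<Longrightarrow> open (G j) \<and> G j \<subseteq> \<Omega>2"
    and disj: "\<And>i j. i \<in> J \<Longrightarrow> j \<in> J \<Longrightarrow> i \<noteq> j \<Longrightarrow> G i \<inter> G j = {}"
    and fin: "\<And>j. j \<in> J \<Longrightarrow> Mconst f \<Omega>1 q (G j) < top"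
    and u: "test_fn (\<Union>j\<in>J. G j) u"
  shows "var (u \<circ> f) \<Omega>1 \<le> (\<Sum>j\<in>J. Mconst f \<Omega>1 q (G j) * ennreal (Lq_norm_grad q (G j) u))"
proof -
  define u' where "u' j = (\<lambda>x. if x \<in> G j then u x else 0)" for j
  have u': "test_fn (G j) (u' j)" if "j \<in> J" for j
    unfolding u'_def
  proof (rule test_fn_restrict_open[OF u, of _ "\<Union>i\<in>J - {j}. G i"])
    show "open (G j)" "open (\<Union>i\<in>J - {j}. G i)" using G that by auto
    show "tsupport u \<subseteq> G j \<union> (\<Union>i\<in>J - {j}. G i)" using u that by (auto simp: test_fn_def)
    show "G j \<inter> (\<Union>i\<in>J - {j}. G i) = {}" using disj that by blast
  qed
  have u0: "u y = 0" if "y \<notin> (\<Union>j\<in>J. G j)" for y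
    using u that eq_0_outside_tsupport[of y u] by (auto simp: test_fn_def)
  have "u \<circ> f = (\<lambda>x. \<Sum>j\<in>J. (u' j \<circ> f) x)"
  proof
    fix x
    show "(u \<circ> f) x = (\<Sum>j\<in>J. (u' j \<circ> f) x)"
      using sum_restrict_disjoint[of J G "f x" u] \<open>finite J\<close> disj u0 by (simp add: u'_def)
  qed
  then have "var (u \<circ> f) \<Omega>1 = var (\<lambda>x. \<Sum>j\<in>J. (u' j \<circ> f) x) \<Omega>1"
    by (rule arg_cong)
  also have "var (\<lambda>x. \<Sum>j\<in>J. (u' j \<circ> f) x) \<Omega>1 \<le> (\<Sum>j\<in>J. var (u' j \<circ> f) \<Omega>1)"
  proof (rule var_sum_le[OF \<open>finite J\<close>])
    fix \<phi> :: "real^'n \<Rightarrow> real^'n" and j assume "\<forall>i. C1c \<Omega>1 (\<lambda>y. \<phi> y $ i)" "j \<in> J"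
    moreover have "test_fn \<Omega>2 (u' j)" using u'[OF \<open>j \<in> J\<close>] G[OF \<open>j \<in> J\<close>] by (auto simp: test_fn_def)
    ultimately show "set_integrable lborel \<Omega>1 (\<lambda>x. (u' j \<circ> f) x * divg \<phi> x)"
      using L1 set_integrable_mult_divg by blast
  qed
  also have "\<dots> \<le> (\<Sum>j\<in>J. Mconst f \<Omega>1 q (G j) * ennreal (Lq_norm_grad q (G j) (u' j)))"
    using fin u' by (intro sum_mono var_comp_le_Mconst)
  also have "\<dots> = (\<Sum>j\<in>J. Mconst f \<Omega>1 q (G j) * ennreal (Lq_norm_grad q (G j) u))"
    using G by (intro sum.cong refl) (simp add: u'_def Lq_norm_grad_restrict_open)
  finally show ?thesis .
qed

lemma Mconst_disjoint_UN_le: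
  fixes f :: "real^'n \<Rightarrow> real^'n" and G :: "'i \<Rightarrow> (real^'n) set"
  assumes L1: "\<And>v. test_fn \<Omega>2 v \<Longrightarrow> L1_loc \<Omega>1 (v \<circ> f)"
    and "finite J" and G: "\<And>j. j \<in> J \<Longrightarrow> open (G j) \<and> G j \<subseteq> \<Omega>2"
    and disj: "\<And>i j. i \<in> J \<Longrightarrow> j \<in> J \<Longrightarrow> i \<noteq> j \<Longrightarrow> G i \<inter> G j = {}"
    and fin: "\<And>j. j \<in> J \<Longrightarrow> Mconst f \<Omega>1 q (G j) < top"
    and "1 < q" "q' = q / (q - 1)"
  shows "Mconst f \<Omega>1 q (\<Union>j\<in>J. G j)
           \<le> ennreal ((\<Sum>j\<in>J. enn2real (Mconst f \<Omega>1 q (G j)) powr q') powr (1/q'))"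
proof -
  define m where "m j = enn2real (Mconst f \<Omega>1 q (G j))" for j
  have M: "Mconst f \<Omega>1 q (G j) = ennreal (m j)" if "j \<in> J" for j
    using fin[OF that] by (simp add: m_def less_top)
  have m0: "m j \<ge> 0" for j
    by (simp add: m_def)
  have "q' > 1" "1/q' + 1/q = 1"
    using \<open>1 < q\<close> by (simp_all add: \<open>q' = q / (q - 1)\<close> field_simps)
  have "Mconst f \<Omega>1 q (\<Union>j\<in>J. G j) \<le> ennreal ((\<Sum>j\<in>J. m j powr q') powr (1/q'))"
    unfolding Mconst_def[of f \<Omega>1 q "\<Union>j\<in>J. G j"]
  proof (rule Inf_lower, safe)
    fix u assume u: "test_fn (\<Union>j\<in>J. G j) u"
    have "var (u \<circ> f) \<Omega>1 \<le> (\<Sum>j\<in>J. Mconst f \<Omega>1 q (G j) * ennreal (Lq_norm_grad q (G j) u))"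
      by (rule var_comp_le_sum_Mconst[OF L1 \<open>finite J\<close> G disj fin u])
    also have "\<dots> = (\<Sum>j\<in>J. ennreal (m j * Lq_norm_grad q (G j) u))"
      using M by (intro sum.cong refl) (simp add: m0 ennreal_mult Lq_norm_grad_nonneg)
    also have "\<dots> = ennreal (\<Sum>j\<in>J. m j * Lq_norm_grad q (G j) u)"
      by (simp add: m0 Lq_norm_grad_nonneg)
    also have "\<dots> \<le> ennreal ((\<Sum>j\<in>J. m j powr q') powr (1/q')
                    * (\<Sum>j\<in>J. Lq_norm_grad q (G j) u powr q) powr (1/q))"
      using \<open>q' > 1\<close> \<open>1 < q\<close> \<open>1/q' + 1/q = 1\<close>
      by (intro ennreal_leI Holder_inequality_sum) (simp_all add: m0 Lq_norm_grad_nonneg)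
    also have "\<dots> = ennreal ((\<Sum>j\<in>J. m j powr q') powr (1/q'))
                    * ennreal (Lq_norm_grad q (\<Union>j\<in>J. G j) u)"
      using \<open>1 < q\<close> G disj
      by (simp add: Lq_norm_grad_disjoint_UN[OF u _ \<open>finite J\<close>] ennreal_mult)
    finally show "var (u \<circ> f) \<Omega>1 \<le> ennreal ((\<Sum>j\<in>J. m j powr q') powr (1/q'))
                    * ennreal (Lq_norm_grad q (\<Union>j\<in>J. G j) u)" .
  qed
  then show ?thesis by (simp only: m_def)
qed

lemma ennpow_le_ennreal:
  assumes "M \<le> ennreal (S powr (1/p))" "S \<ge> 0" "p > 0"
  shows "ennpow M p \<le> ennreal S"
proof -
  have "M \<noteq> top" using assms(1) by (auto simp: top_unique)
  have "enn2real M \<le> S powr (1/p)" using assms(1) by (intro enn2real_leI) simp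
  then have "enn2real M powr p \<le> (S powr (1/p)) powr p"
    using \<open>p > 0\<close> by (intro powr_mono2) simp_all
  also have "\<dots> = S" using assms(2,3) by (simp add: powr_powr)
  finally show ?thesis using \<open>M \<noteq> top\<close> by (simp add: ennpow_def ennreal_leI)
qed

lemma ennpow_Mconst_disjoint_UN_le:
  fixes f :: "real^'n \<Rightarrow> real^'n" and G :: "'i \<Rightarrow> (real^'n) set"
  assumes L1: "\<And>v. test_fn \<Omega>2 v \<Longrightarrow> L1_loc \<Omega>1 (v \<circ> f)"
    and "finite J" and G: "\<And>j. j \<in> J \<Longrightarrow> open (G j) \<and> G j \<subseteq> \<Omega>2"
    and disj: "\<And>i j. i \<in> J \<Longrightarrow> j \<in> J \<Longrightarrow> i \<noteq> j \<Longrightarrow> G i \<inter> G j = {}"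
    and "1 < q" "q' = q / (q - 1)"
  shows "ennpow (Mconst f \<Omega>1 q (\<Union>j\<in>J. G j)) q' \<le> (\<Sum>j\<in>J. ennpow (Mconst f \<Omega>1 q (G j)) q')"
proof (cases "\<exists>j\<in>J. Mconst f \<Omega>1 q (G j) = top")
  case True
  then have "(\<Sum>j\<in>J. ennpow (Mconst f \<Omega>1 q (G j)) q') = top"
    using \<open>finite J\<close> by (auto simp: ennpow_def)
  then show ?thesis by (metis top_greatest)
next
  case False
  let ?m = "\<lambda>j. enn2real (Mconst f \<Omega>1 q (G j))"
  have "q' > 0" using \<open>1 < q\<close> \<open>q' = q / (q - 1)\<close> by simp
  have "Mconst f \<Omega>1 q (\<Union>j\<in>J. G j) \<le> ennreal ((\<Sum>j\<in>J. ?m j powr q') powr (1/q'))"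
    using False by (intro Mconst_disjoint_UN_le[OF L1 \<open>finite J\<close> G disj _ assms(5,6)])
                   (auto simp: top.not_eq_extremum)
  then have "ennpow (Mconst f \<Omega>1 q (\<Union>j\<in>J. G j)) q' \<le> ennreal (\<Sum>j\<in>J. ?m j powr q')"
    using \<open>q' > 0\<close> by (intro ennpow_le_ennreal) (simp_all add: sum_nonneg)
  also have "\<dots> = (\<Sum>j\<in>J. ennpow (Mconst f \<Omega>1 q (G j)) q')"
    unfolding sum_ennreal[symmetric, OF powr_ge_zero]
    using False by (intro sum.cong refl) (auto simp: ennpow_def)
  finally show ?thesis .
qed

theorem mainTheorem4:
  fixes f :: "real^'n \<Rightarrow> real^'n"
    and \<Omega>1 \<Omega>2 :: "(real^'n) set"
    and q q' :: real
  assumes "open \<Omega>1" and "open \<Omega>2"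
    and "1 < q" and "q' = q / (q - 1)"
    and "BV_loc_vec \<Omega>1 f"
    and "f ` \<Omega>1 \<subseteq> \<Omega>2"
    and "no_jump_part \<Omega>1 f"
    and "\<And>u. test_fn \<Omega>2 u \<Longrightarrow> BV_loc \<Omega>1 (u \<circ> f)"
  shows "(\<forall>G G'. open G \<and> open G' \<and> G \<subseteq> G' \<and> G' \<subseteq> \<Omega>2 \<longrightarrow>
              Mconst f \<Omega>1 q G \<le> Mconst f \<Omega>1 q G')
       \<and> (\<forall>(k::nat) (Gs :: nat \<Rightarrow> (real^'n) set).
            (\<forall>j\<in>{1..k}. open (Gs j) \<and> Gs j \<subseteq> \<Omega>2) \<and>
            (\<forall>i\<in>{1..k}. \<forall>j\<in>{1..k}. i \<noteq> j \<longrightarrow> Gs i \<inter> Gs j = {}) \<longrightarrow>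
            ennpow (Mconst f \<Omega>1 q (\<Union>j\<in>{1..k}. Gs j)) q'
              \<le> (\<Sum>j\<in>{1..k}. ennpow (Mconst f \<Omega>1 q (Gs j)) q'))"
proof (intro conjI allI impI)
  fix G G' :: "(real^'n) set"
  assume "open G \<and> open G' \<and> G \<subseteq> G' \<and> G' \<subseteq> \<Omega>2"
  then show "Mconst f \<Omega>1 q G \<le> Mconst f \<Omega>1 q G'" by (simp add: Mconst_mono)
next
  fix k :: nat and Gs :: "nat \<Rightarrow> (real^'n) set"
  assume "(\<forall>j\<in>{1..k}. open (Gs j) \<and> Gs j \<subseteq> \<Omega>2) \<and>
          (\<forall>i\<in>{1..k}. \<forall>j\<in>{1..k}. i \<noteq> j \<longrightarrow> Gs i \<inter> Gs j = {})"
  moreover have "L1_loc \<Omega>1 (v \<circ> f)" if "test_fn \<Omega>2 v" for v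
    using assms(8)[OF that] by (simp add: BV_loc_def)
  ultimately show "ennpow (Mconst f \<Omega>1 q (\<Union>j\<in>{1..k}. Gs j)) q'
                     \<le> (\<Sum>j\<in>{1..k}. ennpow (Mconst f \<Omega>1 q (Gs j)) q')"
    by (intro ennpow_Mconst_disjoint_UN_le[OF _ _ _ _ assms(3,4)]) auto
qed

end
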